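(* Let $p(\theta,\phi,y)$ be a joint density in the unknowns $(\theta,\phi)$ (with $y$ fixed), where $\theta=(\theta_0,\dots,\theta_K)$ is split into $K+1$ blocks. Let $(\mathcal{C},\mathcal{U})$ be a partition of $\{0,\dots,K\}$, write $\theta_{\mathcal{C}}=(\theta_k)_{k\in\mathcal{C}}$, $\theta_{\mathcal{U}}=(\theta_k)_{k\in\mathcal{U}}$, and consider the partially factorized family $$\mathcal{Q}_{PF}=\Big\{q:\ q(\theta,\phi)=q(\theta_{\mathcal{C}}\mid\theta_{\mathcal{U}})\Big[\prod_{k\in\mathcal{U}}q(\theta_k)\Big]q(\phi)\Big\}$$ and the objective (ELBO) $L(q)=\mathbb{E}_{q(\theta,\phi)}[\log p(\theta,\phi,y)-\log q(\theta,\phi)]$. Assume all integrals and expectations below are finite. Then the coordinate-wise maximizers of $L$ over $\mathcal{Q}_{PF}$ are as follows: (i) for fixed $q(\theta)=q(\theta_{\mathcal{C}}\mid\theta_{\mathcal{U}})\prod_{k\in\mathcal{U}}q(\theta_k)$, the maximizer over $q(\phi)$ is $q(\phi)\propto\exp\{\mathbb{E}_{q(\theta)}[\log p(\theta,\phi,y)]\}$; (ii) for fixed $q(\phi)$ and fixed $q(\theta_k)$, $k\in\mathcal{U}$, the maximizer over the conditional factor $q(\theta_{\mathcal{C}}\mid\theta_{\mathcal{U}})$ is $$q(\theta_{\mathcal{C}}\mid\theta_{\mathcal{U}})=\frac{\exp\{\mathbb{E}_{q(\phi)}[\log p(\theta,\phi,y)]\}}{\int\exp\{\mathbb{E}_{q(\phi)}[\log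 p(\theta,\phi,y)]\}\,\mathrm{d}\theta_{\mathcal{C}}};$$ (iii) if $q(\theta_{\mathcal{C}}\mid\theta_{\mathcal{U}})$ is set as in (ii), then for $k\in\mathcal{U}$ and fixed $q(\phi)$ and $q(\theta_m)$, $m\in\mathcal{U}\setminus\{k\}$, the maximizer over $q(\theta_k)$ is $$q(\theta_k)\propto\exp\Big\{\mathbb{E}_{q(\theta_{\mathcal{U}\setminus k})}\Big[\log\int\exp\{\mathbb{E}_{q(\phi)}[\log p(\theta,\phi,y)]\}\,\mathrm{d}\theta_{\mathcal{C}}\Big]\Big\},$$ where $q(\theta_{\mathcal{U}\setminus k})=\prod_{m\in\mathcal{U},m\neq k}q(\theta_m)$.
   Context: Notation for blocks: $\mathcal{U}\setminus k$ denotes $\mathcal{U}$ with $k$ removed. The family $\mathcal{Q}_{PF}$ is the set of all joint densities over $(\theta,\phi)$ factorizing as displayed. When $\mathcal{C}=\emptyset$ this is the standard fully factorized mean-field family. *)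

theory Defs
  imports "HOL-Analysis.Analysis"
begin

text \<open>The parameter vector theta = (theta_0,...,theta_K) is a function on the
index set {0..K}; block k takes values in the measure space M k (all blocks share the
carrier type 'a, but each has its own base measure).  All densities are densities with respect to these base measures
(product measures for several blocks).  The data y is fixed and suppressed: p theta phi
stands for p(theta,phi,y).\<close>

definition ThetaM :: "nat \<Rightarrow> (nat \<Rightarrow> 'a measure) \<Rightarrow> (nat \<Rightarrow> 'a) measure" where
  "ThetaM K M = PiM {0..K} M"

definition is_density :: "'b measure \<Rightarrow> ('b \<Rightarrow> real) \<Rightarrow> bool" where
  "is_density N f \<longleftrightarrow> f \<in> borel_measurable N \<and> (\<forall>x\<in>space N. 0 \<le> f x)
     \<and> (\<integral>\<^sup>+ x. ennreal (f x) \<partial>N) = 1"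

text \<open>A conditional density q(theta_C | theta_U), represented as a function of the full
vector theta (= merge of theta_C and theta_U), integrating to one in theta_C for every
value of theta_U.\<close>
definition is_cond_density ::
  "nat \<Rightarrow> (nat \<Rightarrow> 'a measure) \<Rightarrow> nat set \<Rightarrow> nat set \<Rightarrow> ((nat \<Rightarrow> 'a) \<Rightarrow> real) \<Rightarrow> bool" where
  "is_cond_density K M C U qc \<longleftrightarrow> qc \<in> borel_measurable (ThetaM K M)
     \<and> (\<forall>\<theta>\<in>space (ThetaM K M). 0 \<le> qc \<theta>)
     \<and> (\<forall>\<theta>U\<in>space (PiM U M).
          (\<integral>\<^sup>+ \<theta>C. ennreal (qc (merge C U (\<theta>C, \<theta>U))) \<partial>PiM C M) = 1)"

definition in_QPF ::
  "nat \<Rightarrow> (nat \<Rightarrow> 'a measure) \<Rightarrow> 'b measure \<Rightarrow> nat set \<Rightarrow> nat set \<Rightarrow>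
   ((nat \<Rightarrow> 'a) \<Rightarrow> real) \<Rightarrow> (nat \<Rightarrow> 'a \<Rightarrow> real) \<Rightarrow> ('b \<Rightarrow> real) \<Rightarrow> bool" where
  "in_QPF K M N C U qc qu qphi \<longleftrightarrow> is_cond_density K M C U qc
     \<and> (\<forall>k\<in>U. is_density (M k) (qu k)) \<and> is_density N qphi"

definition qtheta :: "nat set \<Rightarrow> ((nat \<Rightarrow> 'a) \<Rightarrow> real) \<Rightarrow> (nat \<Rightarrow> 'a \<Rightarrow> real) \<Rightarrow> (nat \<Rightarrow> 'a) \<Rightarrow> real" where
  "qtheta U qc qu \<theta> = qc \<theta> * (\<Prod>k\<in>U. qu k (\<theta> k))"

definition qjoint ::
  "nat set \<Rightarrow> ((nat \<Rightarrow> 'a) \<Rightarrow> real) \<Rightarrow> (nat \<Rightarrow> 'a \<Rightarrow> real) \<Rightarrow> ('b \<Rightarrow> real) \<Rightarrow> (nat \<Rightarrow> 'a) \<times> 'b \<Rightarrow> real" where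
  "qjoint U qc qu qphi z = qtheta U qc qu (fst z) * qphi (snd z)"

text \<open>The ELBO L(q) = E_q[log p - log q] (with the convention 0 log 0 = 0).\<close>
definition elbo ::
  "nat \<Rightarrow> (nat \<Rightarrow> 'a measure) \<Rightarrow> 'b measure \<Rightarrow> nat set \<Rightarrow> ((nat \<Rightarrow> 'a) \<Rightarrow> 'b \<Rightarrow> real) \<Rightarrow>
   ((nat \<Rightarrow> 'a) \<Rightarrow> real) \<Rightarrow> (nat \<Rightarrow> 'a \<Rightarrow> real) \<Rightarrow> ('b \<Rightarrow> real) \<Rightarrow> real" where
  "elbo K M N U p qc qu qphi =
     (\<integral>z. qjoint U qc qu qphi z * (ln (p (fst z) (snd z)) - ln (qjoint U qc qu qphi z))
        \<partial>(ThetaM K M \<Otimes>\<^sub>M N))"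

definition elbo_finite ::
  "nat \<Rightarrow> (nat \<Rightarrow> 'a measure) \<Rightarrow> 'b measure \<Rightarrow> nat set \<Rightarrow> ((nat \<Rightarrow> 'a) \<Rightarrow> 'b \<Rightarrow> real) \<Rightarrow>
   ((nat \<Rightarrow> 'a) \<Rightarrow> real) \<Rightarrow> (nat \<Rightarrow> 'a \<Rightarrow> real) \<Rightarrow> ('b \<Rightarrow> real) \<Rightarrow> bool" where
  "elbo_finite K M N U p qc qu qphi \<longleftrightarrow>
     integrable (ThetaM K M \<Otimes>\<^sub>M N) (\<lambda>z. qjoint U qc qu qphi z * ln (p (fst z) (snd z)))
   \<and> integrable (ThetaM K M \<Otimes>\<^sub>M N) (\<lambda>z. qjoint U qc qu qphi z * ln (qjoint U qc qu qphi z))"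

definition Etheta_logp ::
  "nat \<Rightarrow> (nat \<Rightarrow> 'a measure) \<Rightarrow> nat set \<Rightarrow> ((nat \<Rightarrow> 'a) \<Rightarrow> 'b \<Rightarrow> real) \<Rightarrow>
   ((nat \<Rightarrow> 'a) \<Rightarrow> real) \<Rightarrow> (nat \<Rightarrow> 'a \<Rightarrow> real) \<Rightarrow> 'b \<Rightarrow> real" where
  "Etheta_logp K M U p qc qu \<phi> = (\<integral>\<theta>. qtheta U qc qu \<theta> * ln (p \<theta> \<phi>) \<partial>ThetaM K M)"

definition opt_phi ::
  "nat \<Rightarrow> (nat \<Rightarrow> 'a measure) \<Rightarrow> 'b measure \<Rightarrow> nat set \<Rightarrow> ((nat \<Rightarrow> 'a) \<Rightarrow> 'b \<Rightarrow> real) \<Rightarrow>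
   ((nat \<Rightarrow> 'a) \<Rightarrow> real) \<Rightarrow> (nat \<Rightarrow> 'a \<Rightarrow> real) \<Rightarrow> 'b \<Rightarrow> real" where
  "opt_phi K M N U p qc qu \<phi> =
     exp (Etheta_logp K M U p qc qu \<phi>) / (\<integral>\<psi>. exp (Etheta_logp K M U p qc qu \<psi>) \<partial>N)"

definition Ephi_logp :: "'b measure \<Rightarrow> ((nat \<Rightarrow> 'a) \<Rightarrow> 'b \<Rightarrow> real) \<Rightarrow> ('b \<Rightarrow> real) \<Rightarrow> (nat \<Rightarrow> 'a) \<Rightarrow> real" where
  "Ephi_logp N p qphi \<theta> = (\<integral>\<phi>. qphi \<phi> * ln (p \<theta> \<phi>) \<partial>N)"

definition Zc ::
  "(nat \<Rightarrow> 'a measure) \<Rightarrow> 'b measure \<Rightarrow> nat set \<Rightarrow> nat set \<Rightarrow> ((nat \<Rightarrow> 'a) \<Rightarrow> 'b \<Rightarrow> real) \<Rightarrow>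
   ('b \<Rightarrow> real) \<Rightarrow> (nat \<Rightarrow> 'a) \<Rightarrow> real" where
  "Zc M N C U p qphi \<theta>U = (\<integral>\<theta>C. exp (Ephi_logp N p qphi (merge C U (\<theta>C, \<theta>U))) \<partial>PiM C M)"

definition opt_cond ::
  "(nat \<Rightarrow> 'a measure) \<Rightarrow> 'b measure \<Rightarrow> nat set \<Rightarrow> nat set \<Rightarrow> ((nat \<Rightarrow> 'a) \<Rightarrow> 'b \<Rightarrow> real) \<Rightarrow>
   ('b \<Rightarrow> real) \<Rightarrow> (nat \<Rightarrow> 'a) \<Rightarrow> real" where
  "opt_cond M N C U p qphi \<theta> =
     exp (Ephi_logp N p qphi \<theta>) / Zc M N C U p qphi (restrict \<theta> U)"

definition Erest_logZ ::
  "(nat \<Rightarrow> 'a measure) \<Rightarrow> 'b measure \<Rightarrow> nat set \<Rightarrow> nat set \<Rightarrow> ((nat \<Rightarrow> 'a) \<Rightarrow> 'b \<Rightarrow> real) \<Rightarrow>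
   (nat \<Rightarrow> 'a \<Rightarrow> real) \<Rightarrow> ('b \<Rightarrow> real) \<Rightarrow> nat \<Rightarrow> 'a \<Rightarrow> real" where
  "Erest_logZ M N C U p qu qphi k x =
     (\<integral>\<theta>r. (\<Prod>m\<in>U - {k}. qu m (\<theta>r m)) * ln (Zc M N C U p qphi (\<theta>r(k := x)))
        \<partial>PiM (U - {k}) M)"

definition opt_block ::
  "(nat \<Rightarrow> 'a measure) \<Rightarrow> 'b measure \<Rightarrow> nat set \<Rightarrow> nat set \<Rightarrow> ((nat \<Rightarrow> 'a) \<Rightarrow> 'b \<Rightarrow> real) \<Rightarrow>
   (nat \<Rightarrow> 'a \<Rightarrow> real) \<Rightarrow> ('b \<Rightarrow> real) \<Rightarrow> nat \<Rightarrow> 'a \<Rightarrow> real" where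
  "opt_block M N C U p qu qphi k x =
     exp (Erest_logZ M N C U p qu qphi k x) / (\<integral>y. exp (Erest_logZ M N C U p qu qphi k y) \<partial>M k)"

end

theory Submission
  imports Defs
begin

text \<open>Every coordinate update maximizes, over the densities r of one factor, an objective of
the form \<open>\<integral> r (g - c - ln r)\<close> in which g and c do not depend on r: the other factors are
integrated out by Fubini, each being either a density or a constant weight.  Since
\<open>ln t \<le> t - 1\<close>, such an objective is at most \<open>ln (\<integral> exp g) - c\<close>, with equality for the Gibbs
density \<open>exp g / \<integral> exp g\<close>.  For q(\<phi>) the exponent g is the q(\<theta>)-expectation of log p.  For
the conditional q(\<theta>C | \<theta>U) the same argument runs on every fibre \<open>\<theta>U = b\<close>, where the product of
the marginals q(b k) is a constant weight, and g is the q(\<phi>)-expectation of log p.  With the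
optimal conditional plugged in, that fibre contributes \<open>w (ln Z b - c - ln w)\<close> with w the product
of the marginals, so the update of q(\<theta>k) is again of Gibbs form, with g the expectation of
\<open>ln Z\<close> over the remaining marginals.\<close>

section \<open>Gibbs' variational principle\<close>

definition gibbs_density :: "'x measure \<Rightarrow> ('x \<Rightarrow> real) \<Rightarrow> 'x \<Rightarrow> real" where
  "gibbs_density A g x = exp (g x) / (\<integral>y. exp (g y) \<partial>A)"

lemma is_density_integrable:
  assumes "is_density A r"
  shows "integrable A r" "integral\<^sup>L A r = 1"
proof -
  show i: "integrable A r"
    using assms unfolding is_density_def by (intro integrableI_nonneg) (auto intro: AE_I2)
  have "(\<integral>\<^sup>+ x. ennreal (r x) \<partial>A) = ennreal (integral\<^sup>L A r)"
    using assms i unfolding is_density_def by (intro nn_integral_eq_integral) (auto intro: AE_I2)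
  then show "integral\<^sup>L A r = 1"
    using assms unfolding is_density_def by simp
qed

text \<open>The density r only serves to show that A is not a null measure.\<close>
lemma integral_exp_pos:
  fixes g :: "'x \<Rightarrow> real"
  assumes r: "is_density A r" and ie: "integrable A (\<lambda>x. exp (g x))"
  shows "0 < (\<integral>x. exp (g x) \<partial>A)"
proof (rule ccontr)
  assume "\<not> ?thesis"
  moreover have "0 \<le> (\<integral>x. exp (g x) \<partial>A)" by (rule integral_nonneg_AE) simp
  ultimately have "(\<integral>x. exp (g x) \<partial>A) = 0" by simp
  then have "AE x in A. False"
    using integral_nonneg_eq_0_iff_AE[of A "\<lambda>x. exp (g x)"] ie by simp
  then have "(\<integral>\<^sup>+ x. ennreal (r x) \<partial>A) = (\<integral>\<^sup>+ x. 0 \<partial>A)"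
    by (intro nn_integral_cong_AE) (auto elim: eventually_mono)
  with r show False
    unfolding is_density_def by simp
qed

lemma gibbs_density_nonneg: "0 \<le> gibbs_density A g x"
  unfolding gibbs_density_def by (simp add: integral_nonneg_AE)

lemma is_density_gibbs_density:
  fixes g :: "'x \<Rightarrow> real"
  assumes r: "is_density A r" and ie: "integrable A (\<lambda>x. exp (g x))"
  shows "is_density A (gibbs_density A g)"
proof -
  let ?Z = "\<integral>x. exp (g x) \<partial>A"
  have Z: "0 < ?Z" by (rule integral_exp_pos[OF r ie])
  have i: "integrable A (gibbs_density A g)"
    using ie unfolding gibbs_density_def[abs_def] by simp
  have "(\<integral>\<^sup>+ x. ennreal (gibbs_density A g x) \<partial>A) = ennreal (integral\<^sup>L A (gibbs_density A g))"
    using i by (intro nn_integral_eq_integral) (auto simp: gibbs_density_nonneg)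
  also have "integral\<^sup>L A (gibbs_density A g) = 1"
    using Z unfolding gibbs_density_def[abs_def] by simp
  finally show ?thesis
    using i unfolding is_density_def by (auto simp: gibbs_density_nonneg)
qed

lemma gibbs_pointwise:
  fixes r g c Z :: real
  assumes "0 \<le> r" "0 < Z"
  shows "r * (g - c - ln r) \<le> r * (ln Z - c) + exp g / Z - r"
proof (cases "r = 0")
  case True
  then show ?thesis using assms by simp
next
  case False
  with assms have r: "0 < r" by simp
  have "ln (exp g / (Z * r)) \<le> exp g / (Z * r) - 1"
    using r assms by (intro ln_le_minus_one) simp
  also have "ln (exp g / (Z * r)) = g - ln Z - ln r"
    using r assms by (simp add: ln_div ln_mult)
  finally have "r * (g - ln Z - ln r) \<le> r * (exp g / (Z * r) - 1)"
    using r by (simp add: mult_left_mono)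
  also have "r * (exp g / (Z * r) - 1) = exp g / Z - r"
    using r by (simp add: field_simps)
  finally show ?thesis by (simp add: algebra_simps)
qed

lemma gibbs_objective_le:
  fixes g :: "'x \<Rightarrow> real"
  assumes r: "is_density A r" and ie: "integrable A (\<lambda>x. exp (g x))"
    and il: "integrable A (\<lambda>x. r x * (g x - c - ln (r x)))"
  shows "(\<integral>x. r x * (g x - c - ln (r x)) \<partial>A) \<le> ln (\<integral>x. exp (g x) \<partial>A) - c"
proof -
  define Z where "Z = (\<integral>x. exp (g x) \<partial>A)"
  have Z: "0 < Z" unfolding Z_def by (rule integral_exp_pos[OF r ie])
  note ri = is_density_integrable[OF r]
  have i: "integrable A (\<lambda>x. r x * (ln Z - c))" "integrable A (\<lambda>x. exp (g x) / Z)"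
    using ri ie by auto
  have "(\<integral>x. r x * (g x - c - ln (r x)) \<partial>A) \<le> (\<integral>x. r x * (ln Z - c) + exp (g x) / Z - r x \<partial>A)"
    using r Z i ri il unfolding is_density_def by (intro integral_mono) (auto intro!: gibbs_pointwise)
  also have "\<dots> = (\<integral>x. r x * (ln Z - c) \<partial>A) + (\<integral>x. exp (g x) / Z \<partial>A) - (\<integral>x. r x \<partial>A)"
    using i ri by simp
  also have "\<dots> = ln Z - c"
    using ri Z by (simp add: Z_def)
  finally show ?thesis unfolding Z_def .
qed

lemma gibbs_density_objective:
  fixes g :: "'x \<Rightarrow> real"
  assumes r: "is_density A r" and ie: "integrable A (\<lambda>x. exp (g x))"
  shows "(\<integral>x. gibbs_density A g x * (g x - c - ln (gibbs_density A g x)) \<partial>A)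
    = ln (\<integral>x. exp (g x) \<partial>A) - c"
proof -
  let ?Z = "\<integral>x. exp (g x) \<partial>A"
  have Z: "0 < ?Z" by (rule integral_exp_pos[OF r ie])
  have exponent: "g x - c - ln (gibbs_density A g x) = ln ?Z - c" for x
    using Z unfolding gibbs_density_def by (simp add: ln_div)
  have "(\<integral>x. gibbs_density A g x * (g x - c - ln (gibbs_density A g x)) \<partial>A)
      = (\<integral>x. gibbs_density A g x * (ln ?Z - c) \<partial>A)"
    by (simp only: exponent)
  also have "\<dots> = integral\<^sup>L A (gibbs_density A g) * (ln ?Z - c)"
    by simp
  also have "integral\<^sup>L A (gibbs_density A g) = 1"
    using is_density_integrable(2)[OF is_density_gibbs_density[OF r ie]] .
  finally show ?thesis by simp
qed

lemma gibbs_density_maximizes: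
  fixes g :: "'x \<Rightarrow> real"
  assumes r0: "is_density A r0" and ie: "integrable A (\<lambda>x. exp (g x))"
    and F: "\<And>r. is_density A r \<Longrightarrow> admissible r \<Longrightarrow>
      integrable A (\<lambda>x. r x * (g x - c - ln (r x))) \<and> F r = (\<integral>x. r x * (g x - c - ln (r x)) \<partial>A)"
    and "admissible (gibbs_density A g)"
  shows "is_density A (gibbs_density A g)
    \<and> (\<forall>r. is_density A r \<and> admissible r \<longrightarrow> F r \<le> F (gibbs_density A g))"
proof -
  have gd: "is_density A (gibbs_density A g)" by (rule is_density_gibbs_density[OF r0 ie])
  have "F (gibbs_density A g) = ln (\<integral>x. exp (g x) \<partial>A) - c"
    using F[OF gd assms(4)] gibbs_density_objective[OF r0 ie] by simp
  moreover have "F r \<le> ln (\<integral>x. exp (g x) \<partial>A) - c" if "is_density A r" "admissible r" for r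
    using F[OF that] gibbs_objective_le[OF that(1) ie] by simp
  ultimately show ?thesis using gd by simp
qed

lemma scaled_entropy_term:
  fixes w s g c :: real
  assumes "0 \<le> w" "0 \<le> s"
  shows "(s * w) * (g - c - ln (s * w)) = w * (s * (g - (c + ln w) - ln s))"
proof (cases "w = 0 \<or> s = 0")
  case False
  with assms have "ln (s * w) = ln w + ln s" by (simp add: ln_mult)
  then show ?thesis by (simp add: algebra_simps)
qed auto

lemma
  fixes g :: "'x \<Rightarrow> real"
  assumes r0: "\<forall>x\<in>space A. 0 \<le> r x" and w: "0 \<le> w"
  shows integral_scaled_objective: "(\<integral>x. (r x * w) * (g x - c - ln (r x * w)) \<partial>A)
      = w * (\<integral>x. r x * (g x - (c + ln w) - ln (r x)) \<partial>A)"
    and integrable_scaled_objective: "0 < w \<Longrightarrow> integrable A (\<lambda>x. (r x * w) * (g x - c - ln (r x * w)))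
      \<Longrightarrow> integrable A (\<lambda>x. r x * (g x - (c + ln w) - ln (r x)))"
proof -
  have eq: "(r x * w) * (g x - c - ln (r x * w)) = w * (r x * (g x - (c + ln w) - ln (r x)))"
    if "x \<in> space A" for x
    using r0 that w by (intro scaled_entropy_term) auto
  show "(\<integral>x. (r x * w) * (g x - c - ln (r x * w)) \<partial>A)
      = w * (\<integral>x. r x * (g x - (c + ln w) - ln (r x)) \<partial>A)"
    by (simp add: Bochner_Integration.integral_cong[OF refl eq])
  assume "0 < w" and i: "integrable A (\<lambda>x. (r x * w) * (g x - c - ln (r x * w)))"
  have div: "(r x * w) * (g x - c - ln (r x * w)) / w = r x * (g x - (c + ln w) - ln (r x))"
    if "x \<in> space A" for x
    using eq[OF that] \<open>0 < w\<close> by simp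
  have "integrable A (\<lambda>x. (r x * w) * (g x - c - ln (r x * w)) / w)"
    using integrable_divide_zero[OF i] .
  then show "integrable A (\<lambda>x. r x * (g x - (c + ln w) - ln (r x)))"
    by (rule Bochner_Integration.integrable_cong[OF refl, THEN iffD1, rotated]) (rule div)
qed

lemma scaled_gibbs_objective_le:
  fixes g :: "'x \<Rightarrow> real"
  assumes r: "is_density A r" and ie: "integrable A (\<lambda>x. exp (g x))" and w: "0 \<le> w"
    and il: "integrable A (\<lambda>x. (r x * w) * (g x - c - ln (r x * w)))"
  shows "(\<integral>x. (r x * w) * (g x - c - ln (r x * w)) \<partial>A) \<le> w * (ln (\<integral>x. exp (g x) \<partial>A) - c - ln w)"
proof -
  have r0: "\<forall>x\<in>space A. 0 \<le> r x" using r unfolding is_density_def by simp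
  show ?thesis
  proof (cases "w = 0")
    case False
    with w have "0 < w" by simp
    then have "w * (\<integral>x. r x * (g x - (c + ln w) - ln (r x)) \<partial>A)
        \<le> w * (ln (\<integral>x. exp (g x) \<partial>A) - (c + ln w))"
      using gibbs_objective_le[OF r ie integrable_scaled_objective[OF r0 w _ il]]
      by (intro mult_left_mono) auto
    then show ?thesis
      unfolding integral_scaled_objective[OF r0 w] by (simp add: algebra_simps)
  qed (simp add: integral_scaled_objective[OF r0 w])
qed

lemma scaled_gibbs_density_objective:
  fixes g :: "'x \<Rightarrow> real"
  assumes r: "is_density A r" and ie: "integrable A (\<lambda>x. exp (g x))" and w: "0 \<le> w"
  shows "(\<integral>x. (gibbs_density A g x * w) * (g x - c - ln (gibbs_density A g x * w)) \<partial>A)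
    = w * (ln (\<integral>x. exp (g x) \<partial>A) - c - ln w)"
proof -
  have "(\<integral>x. (gibbs_density A g x * w) * (g x - c - ln (gibbs_density A g x * w)) \<partial>A)
      = w * (\<integral>x. gibbs_density A g x * (g x - (c + ln w) - ln (gibbs_density A g x)) \<partial>A)"
    using w by (intro integral_scaled_objective) (auto simp: gibbs_density_nonneg)
  also have "\<dots> = w * (ln (\<integral>x. exp (g x) \<partial>A) - (c + ln w))"
    by (simp only: gibbs_density_objective[OF r ie])
  finally show ?thesis by simp
qed

lemma density_objective_split:
  assumes r: "is_density A r" and iL: "integrable A (\<lambda>x. r x * L x)"
    and i: "integrable A (\<lambda>x. r x * (L x - c - ln (r x)))"
  shows "(\<integral>x. r x * (L x - c - ln (r x)) \<partial>A)
    = (\<integral>x. r x * L x \<partial>A) - c - (\<integral>x. r x * ln (r x) \<partial>A)"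
proof -
  note ri = is_density_integrable[OF r]
  have eq: "r x * ln (r x) = r x * L x - c * r x - r x * (L x - c - ln (r x))" for x
    by (simp add: algebra_simps)
  have irl: "integrable A (\<lambda>x. r x * ln (r x))"
    unfolding eq using iL ri i by simp
  have "(\<integral>x. r x * (L x - c - ln (r x)) \<partial>A)
      = (\<integral>x. r x * L x - c * r x - r x * ln (r x) \<partial>A)"
    by (simp add: algebra_simps)
  also have "\<dots> = (\<integral>x. r x * L x \<partial>A) - c * (\<integral>x. r x \<partial>A) - (\<integral>x. r x * ln (r x) \<partial>A)"
    using iL ri irl by simp
  finally show ?thesis using ri by simp
qed

lemma scaled_density_objective:
  assumes r: "is_density A r" and iL: "integrable A (\<lambda>x. r x * L x)" and w: "0 \<le> w"
    and i: "integrable A (\<lambda>x. (r x * w) * (L x - c - ln (r x * w)))"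
  shows "(\<integral>x. (r x * w) * (L x - c - ln (r x * w)) \<partial>A)
    = w * ((\<integral>x. r x * L x \<partial>A) - c - (\<integral>x. r x * ln (r x) \<partial>A) - ln w)"
proof -
  have r0: "\<forall>x\<in>space A. 0 \<le> r x" using r unfolding is_density_def by simp
  show ?thesis
  proof (cases "w = 0")
    case False
    with w have "0 < w" by simp
    then show ?thesis
      unfolding integral_scaled_objective[OF r0 w]
        density_objective_split[OF r iL integrable_scaled_objective[OF r0 w \<open>0 < w\<close> i]]
      by (simp add: algebra_simps)
  qed (simp add: integral_scaled_objective[OF r0 w])
qed

section \<open>Finite products of \<sigma>-finite measures\<close>

text \<open>The library's product locales require every factor to be \<sigma>-finite; only the factors
indexed by I are, so the others are replaced by the null measure, which leaves \<open>PiM I M\<close>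
unchanged.\<close>
definition sigma_finite_extension :: "'i set \<Rightarrow> ('i \<Rightarrow> 'a measure) \<Rightarrow> 'i \<Rightarrow> 'a measure" where
  "sigma_finite_extension I M i = (if i \<in> I then M i else count_space {})"

lemma product_sigma_finite_extension:
  assumes "\<forall>i\<in>I. sigma_finite_measure (M i)"
  shows "product_sigma_finite (sigma_finite_extension I M)"
proof (rule product_sigma_finite.intro)
  fix i
  show "sigma_finite_measure (sigma_finite_extension I M i)"
    using assms
    by (cases "i \<in> I") (simp_all add: sigma_finite_extension_def sigma_finite_measure_count_space_countable)
qed

lemma PiM_sigma_finite_extension:
  "J \<subseteq> I \<Longrightarrow> PiM J (sigma_finite_extension I M) = PiM J M"
  unfolding sigma_finite_extension_def by (rule PiM_cong) auto

lemma sigma_finite_PiM: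
  assumes "\<forall>i\<in>I. sigma_finite_measure (M i)" "finite I"
  shows "sigma_finite_measure (PiM I M)"
proof -
  interpret product_sigma_finite "sigma_finite_extension I M"
    using product_sigma_finite_extension[OF assms(1)] .
  show ?thesis
    using sigma_finite[OF assms(2)] PiM_sigma_finite_extension[of I I M] by simp
qed

lemma pair_sigma_finite_PiM:
  assumes "\<forall>i\<in>I \<union> J. sigma_finite_measure (M i)" "finite I" "finite J"
  shows "pair_sigma_finite (PiM I M) (PiM J M)"
  using sigma_finite_PiM[of I M] sigma_finite_PiM[of J M] assms
  by (simp add: pair_sigma_finite_def)

lemma distr_merge_PiM:
  assumes "\<forall>i\<in>I \<union> J. sigma_finite_measure (M i)" "I \<inter> J = {}" "finite I" "finite J"
  shows "distr (PiM I M \<Otimes>\<^sub>M PiM J M) (PiM (I \<union> J) M) (merge I J) = PiM (I \<union> J) M"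
proof -
  interpret product_sigma_finite "sigma_finite_extension (I \<union> J) M"
    using product_sigma_finite_extension[OF assms(1)] .
  show ?thesis
    using distr_merge[OF assms(2-4)] PiM_sigma_finite_extension[of _ "I \<union> J" M] by simp
qed

lemma
  fixes V :: "_ \<Rightarrow> real"
  assumes "\<forall>i\<in>I \<union> J. sigma_finite_measure (M i)" "I \<inter> J = {}" "finite I" "finite J"
    and V: "integrable (PiM (I \<union> J) M) V"
  shows integrable_merge_PiM: "integrable (PiM I M \<Otimes>\<^sub>M PiM J M) (\<lambda>z. V (merge I J z))"
    and integral_merge_PiM:
      "integral\<^sup>L (PiM (I \<union> J) M) V = (\<integral>z. V (merge I J z) \<partial>(PiM I M \<Otimes>\<^sub>M PiM J M))"
proof -
  note d = distr_merge_PiM[OF assms(1-4)]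
  show "integrable (PiM I M \<Otimes>\<^sub>M PiM J M) (\<lambda>z. V (merge I J z))"
    using V by (intro integrable_distr[OF measurable_merge]) (simp add: d)
  show "integral\<^sup>L (PiM (I \<union> J) M) V = (\<integral>z. V (merge I J z) \<partial>(PiM I M \<Otimes>\<^sub>M PiM J M))"
    using integral_distr[OF measurable_merge, of V I J M] V by (simp add: d)
qed

lemma
  fixes f :: "'a \<Rightarrow> real"
  assumes "sigma_finite_measure (M i)" "f \<in> borel_measurable (M i)"
  shows integral_singleton_PiM: "(\<integral>x. f (x i) \<partial>PiM {i} M) = integral\<^sup>L (M i) f"
    and integrable_singleton_PiM: "integrable (PiM {i} M) (\<lambda>x. f (x i)) \<Longrightarrow> integrable (M i) f"
proof -
  interpret product_sigma_finite "sigma_finite_extension {i} M"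
    using product_sigma_finite_extension[of "{i}" M] assms(1) by simp
  have d: "distr (PiM {i} M) (M i) (\<lambda>x. x i) = M i"
    using distr_singleton[of i] PiM_sigma_finite_extension[of "{i}" "{i}" M]
    by (simp add: sigma_finite_extension_def)
  show "(\<integral>x. f (x i) \<partial>PiM {i} M) = integral\<^sup>L (M i) f"
    using integral_distr[of "\<lambda>x. x i" "PiM {i} M" "M i" f] assms(2) by (simp add: d)
  show "integrable (PiM {i} M) (\<lambda>x. f (x i)) \<Longrightarrow> integrable (M i) f"
    using integrable_distr_eq[of "\<lambda>x. x i" "PiM {i} M" "M i" f] assms(2) by (simp add: d)
qed

lemma borel_measurable_prod_components:
  fixes q :: "'i \<Rightarrow> 'a \<Rightarrow> real"
  assumes "U \<subseteq> I" "\<forall>k\<in>U. q k \<in> borel_measurable (M k)"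
  shows "(\<lambda>\<theta>. \<Prod>k\<in>U. q k (\<theta> k)) \<in> borel_measurable (PiM I M)"
  using assms by (intro borel_measurable_prod) (auto intro: measurable_compose[OF measurable_component_singleton])

lemma prod_components_nonneg:
  fixes q :: "'i \<Rightarrow> 'a \<Rightarrow> real"
  assumes "U \<subseteq> I" "\<forall>k\<in>U. \<forall>x\<in>space (M k). 0 \<le> q k x" "\<theta> \<in> space (PiM I M)"
  shows "0 \<le> (\<Prod>k\<in>U. q k (\<theta> k))"
  using assms by (intro prod_nonneg) (auto simp: space_PiM PiE_iff)

lemma is_density_prod_components:
  assumes "\<forall>k\<in>U. sigma_finite_measure (M k)" "finite U" "\<forall>k\<in>U. is_density (M k) (q k)"
  shows "is_density (PiM U M) (\<lambda>\<theta>. \<Prod>k\<in>U. q k (\<theta> k))"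
proof -
  interpret product_sigma_finite "sigma_finite_extension U M"
    using product_sigma_finite_extension[OF assms(1)] .
  have q: "\<forall>k\<in>U. q k \<in> borel_measurable (M k)" "\<forall>k\<in>U. \<forall>x\<in>space (M k). 0 \<le> q k x"
    "\<forall>k\<in>U. (\<integral>\<^sup>+ x. ennreal (q k x) \<partial>M k) = 1"
    using assms(3) unfolding is_density_def by auto
  have "(\<integral>\<^sup>+ \<theta>. ennreal (\<Prod>k\<in>U. q k (\<theta> k)) \<partial>PiM U M)
      = (\<integral>\<^sup>+ \<theta>. (\<Prod>k\<in>U. ennreal (q k (\<theta> k))) \<partial>PiM U M)"
    using q(2) by (intro nn_integral_cong, subst prod_ennreal) (auto simp: space_PiM PiE_iff)
  also have "\<dots> = (\<Prod>k\<in>U. \<integral>\<^sup>+ x. ennreal (q k x) \<partial>M k)"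
  proof -
    have "\<And>k. k \<in> U \<Longrightarrow> (\<lambda>x. ennreal (q k x)) \<in> borel_measurable (sigma_finite_extension U M k)"
      using q(1) by (auto simp: sigma_finite_extension_def intro: measurable_compose[OF _ measurable_ennreal])
    from product_nn_integral_prod[OF assms(2) this] show ?thesis
      using PiM_sigma_finite_extension[of U U M] by (simp add: sigma_finite_extension_def)
  qed
  also have "\<dots> = 1" using q(3) by simp
  finally have "(\<integral>\<^sup>+ \<theta>. ennreal (\<Prod>k\<in>U. q k (\<theta> k)) \<partial>PiM U M) = 1" .
  moreover have "(\<lambda>\<theta>. \<Prod>k\<in>U. q k (\<theta> k)) \<in> borel_measurable (PiM U M)"
    using q(1) by (intro borel_measurable_prod_components) auto
  moreover have "\<forall>\<theta>\<in>space (PiM U M). 0 \<le> (\<Prod>k\<in>U. q k (\<theta> k))"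
    using q(2) prod_components_nonneg[of U U M q] by blast
  ultimately show ?thesis unfolding is_density_def by blast
qed

section \<open>Integrating out the factors of a product density\<close>

lemma integral_pair_fibrewise_snd:
  fixes F :: "'x \<times> 'y \<Rightarrow> real" and G :: "'y \<Rightarrow> real"
  assumes psf: "pair_sigma_finite A B" and F: "integrable (A \<Otimes>\<^sub>M B) F"
    and G: "G \<in> borel_measurable B"
    and fibre: "\<And>b. b \<in> space B \<Longrightarrow> integrable A (\<lambda>a. F (a, b)) \<Longrightarrow> (\<integral>a. F (a, b) \<partial>A) = G b"
  shows "integrable B G" "integral\<^sup>L (A \<Otimes>\<^sub>M B) F = integral\<^sup>L B G"
proof -
  interpret pair_sigma_finite A B by (rule psf)
  have F': "integrable (A \<Otimes>\<^sub>M B) (\<lambda>(a, b). F (a, b))" using F by simp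
  have ae: "AE b in B. (\<integral>a. F (a, b) \<partial>A) = G b"
    using AE_integrable_snd[OF F'] AE_space by eventually_elim (simp add: fibre)
  show "integrable B G"
    using integrable_cong_AE_imp[OF integrable_snd[OF F'] G ae] .
  have "integral\<^sup>L (A \<Otimes>\<^sub>M B) F = (\<integral>b. (\<integral>a. F (a, b) \<partial>A) \<partial>B)"
    using integral_snd[OF F'] by simp
  also have "\<dots> = integral\<^sup>L B G"
    using integrable_snd[OF F'] by (intro integral_cong_AE[OF _ G ae]) auto
  finally show "integral\<^sup>L (A \<Otimes>\<^sub>M B) F = integral\<^sup>L B G" .
qed

lemma integral_product_objective_snd:
  fixes u :: "'x \<Rightarrow> real" and v :: "'y \<Rightarrow> real" and P :: "'x \<Rightarrow> 'y \<Rightarrow> real"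
  assumes psf: "pair_sigma_finite X Y"
    and u: "is_density X u" and v[measurable]: "v \<in> borel_measurable Y"
    and v0: "\<forall>y\<in>space Y. 0 \<le> v y"
    and P[measurable]: "(\<lambda>z. P (fst z) (snd z)) \<in> borel_measurable (X \<Otimes>\<^sub>M Y)"
    and iP: "integrable (X \<Otimes>\<^sub>M Y) (\<lambda>z. (u (fst z) * v (snd z)) * ln (P (fst z) (snd z)))"
    and iuv: "integrable (X \<Otimes>\<^sub>M Y) (\<lambda>z. (u (fst z) * v (snd z)) * ln (u (fst z) * v (snd z)))"
    and iPy: "\<forall>y\<in>space Y. integrable X (\<lambda>x. u x * ln (P x y))"
  shows "integrable Y (\<lambda>y. v y * ((\<integral>x. u x * ln (P x y) \<partial>X) - (\<integral>x. u x * ln (u x) \<partial>X) - ln (v y)))"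
    "(\<integral>z. (u (fst z) * v (snd z)) * (ln (P (fst z) (snd z)) - ln (u (fst z) * v (snd z))) \<partial>(X \<Otimes>\<^sub>M Y))
     = (\<integral>y. v y * ((\<integral>x. u x * ln (P x y) \<partial>X) - (\<integral>x. u x * ln (u x) \<partial>X) - ln (v y)) \<partial>Y)"
proof -
  interpret pair_sigma_finite X Y by (rule psf)
  have [measurable]: "u \<in> borel_measurable X" using u unfolding is_density_def by simp
  let ?F = "\<lambda>z. (u (fst z) * v (snd z)) * (ln (P (fst z) (snd z)) - ln (u (fst z) * v (snd z)))"
  have F: "integrable (X \<Otimes>\<^sub>M Y) ?F"
    using Bochner_Integration.integrable_diff[OF iP iuv] by (simp add: algebra_simps)
  have "(\<lambda>z. u (fst z) * ln (P (fst z) (snd z))) \<in> borel_measurable (X \<Otimes>\<^sub>M Y)"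
    by measurable
  from measurable_pair_swap[OF this]
  have "(\<lambda>(y, x). u x * ln (P x y)) \<in> borel_measurable (Y \<Otimes>\<^sub>M X)"
    by (simp add: split_beta)
  then have "(\<lambda>y. \<integral>x. u x * ln (P x y) \<partial>X) \<in> borel_measurable Y"
    using M1.borel_measurable_lebesgue_integral[of "\<lambda>y x. u x * ln (P x y)" Y] by simp
  then have G: "(\<lambda>y. v y * ((\<integral>x. u x * ln (P x y) \<partial>X) - (\<integral>x. u x * ln (u x) \<partial>X) - ln (v y)))
      \<in> borel_measurable Y"
    by measurable
  have fibre: "(\<integral>x. ?F (x, y) \<partial>X)
      = v y * ((\<integral>x. u x * ln (P x y) \<partial>X) - (\<integral>x. u x * ln (u x) \<partial>X) - ln (v y))"
    if y: "y \<in> space Y" and i: "integrable X (\<lambda>x. ?F (x, y))" for y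
  proof -
    show ?thesis
      using scaled_density_objective[OF u, of "\<lambda>x. ln (P x y)" "v y" 0] i iPy y v0 by simp
  qed
  show "integrable Y (\<lambda>y. v y * ((\<integral>x. u x * ln (P x y) \<partial>X) - (\<integral>x. u x * ln (u x) \<partial>X) - ln (v y)))"
    "integral\<^sup>L (X \<Otimes>\<^sub>M Y) ?F
     = (\<integral>y. v y * ((\<integral>x. u x * ln (P x y) \<partial>X) - (\<integral>x. u x * ln (u x) \<partial>X) - ln (v y)) \<partial>Y)"
    using integral_pair_fibrewise_snd[OF psf F G fibre] by simp_all
qed

lemma integral_product_objective_fst:
  fixes u :: "'x \<Rightarrow> real" and v :: "'y \<Rightarrow> real" and P :: "'x \<Rightarrow> 'y \<Rightarrow> real"
  assumes psf: "pair_sigma_finite X Y"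
    and u[measurable]: "u \<in> borel_measurable X" and u0: "\<forall>x\<in>space X. 0 \<le> u x"
    and v: "is_density Y v"
    and P[measurable]: "(\<lambda>z. P (fst z) (snd z)) \<in> borel_measurable (X \<Otimes>\<^sub>M Y)"
    and iP: "integrable (X \<Otimes>\<^sub>M Y) (\<lambda>z. (u (fst z) * v (snd z)) * ln (P (fst z) (snd z)))"
    and iuv: "integrable (X \<Otimes>\<^sub>M Y) (\<lambda>z. (u (fst z) * v (snd z)) * ln (u (fst z) * v (snd z)))"
    and iPx: "\<forall>x\<in>space X. integrable Y (\<lambda>y. v y * ln (P x y))"
  shows "integrable X (\<lambda>x. u x * ((\<integral>y. v y * ln (P x y) \<partial>Y) - (\<integral>y. v y * ln (v y) \<partial>Y) - ln (u x)))"
    "(\<integral>z. (u (fst z) * v (snd z)) * (ln (P (fst z) (snd z)) - ln (u (fst z) * v (snd z))) \<partial>(X \<Otimes>\<^sub>M Y))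
     = (\<integral>x. u x * ((\<integral>y. v y * ln (P x y) \<partial>Y) - (\<integral>y. v y * ln (v y) \<partial>Y) - ln (u x)) \<partial>X)"
proof -
  interpret pair_sigma_finite X Y by (rule psf)
  have [measurable]: "v \<in> borel_measurable Y" using v unfolding is_density_def by simp
  have psf': "pair_sigma_finite Y X" using psf by (simp add: pair_sigma_finite_def)
  have P': "(\<lambda>z. P (snd z) (fst z)) \<in> borel_measurable (Y \<Otimes>\<^sub>M X)"
    using measurable_pair_swap[OF P] by (simp add: split_beta)
  have iP': "integrable (Y \<Otimes>\<^sub>M X) (\<lambda>z. (v (fst z) * u (snd z)) * ln (P (snd z) (fst z)))"
    using integrable_product_swap[OF iP] by (simp add: case_prod_unfold ac_simps)
  have iuv': "integrable (Y \<Otimes>\<^sub>M X) (\<lambda>z. (v (fst z) * u (snd z)) * ln (v (fst z) * u (snd z)))"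
    using integrable_product_swap[OF iuv] by (simp add: case_prod_unfold ac_simps)
  note swapped = integral_product_objective_snd[OF psf' v u u0 P' iP' iuv' iPx]
  show "integrable X (\<lambda>x. u x * ((\<integral>y. v y * ln (P x y) \<partial>Y) - (\<integral>y. v y * ln (v y) \<partial>Y) - ln (u x)))"
    using swapped(1) .
  let ?F = "\<lambda>z. (u (fst z) * v (snd z)) * (ln (P (fst z) (snd z)) - ln (u (fst z) * v (snd z)))"
  have "?F \<in> borel_measurable (X \<Otimes>\<^sub>M Y)" by measurable
  then have "integral\<^sup>L (X \<Otimes>\<^sub>M Y) ?F = (\<integral>(y, x). ?F (x, y) \<partial>(Y \<Otimes>\<^sub>M X))"
    by (rule integral_product_swap[symmetric])
  also have "\<dots> = (\<integral>z. (v (fst z) * u (snd z)) * (ln (P (snd z) (fst z)) - ln (v (fst z) * u (snd z)))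
      \<partial>(Y \<Otimes>\<^sub>M X))"
    by (simp add: case_prod_unfold ac_simps)
  finally show "integral\<^sup>L (X \<Otimes>\<^sub>M Y) ?F
     = (\<integral>x. u x * ((\<integral>y. v y * ln (P x y) \<partial>Y) - (\<integral>y. v y * ln (v y) \<partial>Y) - ln (u x)) \<partial>X)"
    using swapped(2) by simp
qed

lemma
  assumes "C \<union> U = {0..K}" "\<forall>k\<in>{0..K}. sigma_finite_measure (M k)"
  shows ThetaM_partition: "ThetaM K M = PiM (C \<union> U) M"
    and finite_partition: "finite C" "finite U"
    and sigma_finite_partition: "\<forall>k\<in>C \<union> U. sigma_finite_measure (M k)"
  using assms finite_subset[of C "{0..K}"] finite_subset[of U "{0..K}"]
  unfolding ThetaM_def by auto

lemma pair_sigma_finite_ThetaM: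
  assumes "\<forall>k\<in>{0..K}. sigma_finite_measure (M k)" "sigma_finite_measure N"
  shows "pair_sigma_finite (ThetaM K M) N"
  using sigma_finite_PiM[of "{0..K}" M] assms unfolding ThetaM_def
  by (simp add: pair_sigma_finite_def)

lemma qtheta_merge:
  "C \<inter> U = {} \<Longrightarrow> qtheta U qc qu (merge C U (a, b)) = qc (merge C U (a, b)) * (\<Prod>k\<in>U. qu k (b k))"
  unfolding qtheta_def by simp

lemma is_density_cond_density_fibre:
  assumes "C \<union> U = {0..K}" and qc: "is_cond_density K M C U qc" and b: "b \<in> space (PiM U M)"
  shows "is_density (PiM C M) (\<lambda>a. qc (merge C U (a, b)))"
proof -
  have "(\<lambda>a. merge C U (a, b)) \<in> measurable (PiM C M) (PiM (C \<union> U) M)"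
    using b by (rule measurable_compose[OF measurable_Pair2' measurable_merge])
  with assms(1) have m: "(\<lambda>a. merge C U (a, b)) \<in> measurable (PiM C M) (ThetaM K M)"
    unfolding ThetaM_def by simp
  show ?thesis
    using qc b measurable_compose[OF m] measurable_space[OF m]
    unfolding is_cond_density_def is_density_def by auto
qed

lemma is_density_qtheta:
  assumes partition: "C \<inter> U = {}" "C \<union> U = {0..K}"
    and sfM: "\<forall>k\<in>{0..K}. sigma_finite_measure (M k)"
    and qc: "is_cond_density K M C U qc" and qu: "\<forall>k\<in>U. is_density (M k) (qu k)"
  shows "is_density (ThetaM K M) (qtheta U qc qu)"
proof -
  note T = ThetaM_partition[OF partition(2) sfM]
  note fin = finite_partition[OF partition(2) sfM]
  note sf = sigma_finite_partition[OF partition(2) sfM]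
  interpret sC: sigma_finite_measure "PiM C M"
    using sigma_finite_PiM[of C M] sf fin by simp
  let ?w = "\<lambda>b. \<Prod>k\<in>U. qu k (b k)"
  have w: "is_density (PiM U M) ?w"
    using is_density_prod_components[of U M qu] sf fin qu by simp
  have qc': "qc \<in> borel_measurable (PiM (C \<union> U) M)" "\<forall>\<theta>\<in>space (PiM (C \<union> U) M). 0 \<le> qc \<theta>"
    using qc T unfolding is_cond_density_def by auto
  have m: "qtheta U qc qu \<in> borel_measurable (PiM (C \<union> U) M)"
    using qc'(1) borel_measurable_prod_components[of U "C \<union> U" qu M] qu
    unfolding qtheta_def[abs_def] is_density_def by auto
  have nonneg: "\<forall>\<theta>\<in>space (PiM (C \<union> U) M). 0 \<le> qtheta U qc qu \<theta>"
    using qc'(2) prod_components_nonneg[of U "C \<union> U" M qu] qu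
    unfolding qtheta_def is_density_def by auto
  have fibre: "(\<integral>\<^sup>+ a. ennreal (qtheta U qc qu (merge U C (b, a))) \<partial>PiM C M) = ennreal (?w b)"
    if b: "b \<in> space (PiM U M)" for b
  proof -
    note qcb = is_density_cond_density_fibre[OF partition(2) qc b]
    have w0: "0 \<le> ?w b" using w b unfolding is_density_def by simp
    have "(\<integral>\<^sup>+ a. ennreal (qtheta U qc qu (merge U C (b, a))) \<partial>PiM C M)
        = (\<integral>\<^sup>+ a. ennreal (qc (merge C U (a, b))) * ennreal (?w b) \<partial>PiM C M)"
    proof (rule nn_integral_cong)
      fix a assume "a \<in> space (PiM C M)"
      then have "0 \<le> qc (merge C U (a, b))" using qcb unfolding is_density_def by simp
      moreover have "qtheta U qc qu (merge U C (b, a)) = qc (merge C U (a, b)) * ?w b"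
        unfolding merge_commute[OF partition(1), of a b, symmetric] by (rule qtheta_merge[OF partition(1)])
      ultimately show "ennreal (qtheta U qc qu (merge U C (b, a)))
          = ennreal (qc (merge C U (a, b))) * ennreal (?w b)"
        using w0 by (simp add: ennreal_mult)
    qed
    also have "\<dots> = (\<integral>\<^sup>+ a. ennreal (qc (merge C U (a, b))) \<partial>PiM C M) * ennreal (?w b)"
      using qcb unfolding is_density_def by (intro nn_integral_multc) auto
    also have "\<dots> = ennreal (?w b)"
      using qcb unfolding is_density_def by simp
    finally show ?thesis .
  qed
  have UC: "U \<union> C = C \<union> U" by auto
  have "(\<integral>\<^sup>+ \<theta>. ennreal (qtheta U qc qu \<theta>) \<partial>PiM (C \<union> U) M)
      = (\<integral>\<^sup>+ \<theta>. ennreal (qtheta U qc qu \<theta>) \<partial>distr (PiM U M \<Otimes>\<^sub>M PiM C M) (PiM (U \<union> C) M) (merge U C))"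
    using distr_merge_PiM[of U C M] sf fin partition(1) UC by (simp add: Int_commute)
  also have "\<dots> = (\<integral>\<^sup>+ z. ennreal (qtheta U qc qu (merge U C z)) \<partial>(PiM U M \<Otimes>\<^sub>M PiM C M))"
    using m UC by (intro nn_integral_distr measurable_merge) auto
  also have "\<dots> = (\<integral>\<^sup>+ b. (\<integral>\<^sup>+ a. ennreal (qtheta U qc qu (merge U C (b, a))) \<partial>PiM C M) \<partial>PiM U M)"
    using m measurable_merge[of U C M] UC by (intro sC.nn_integral_fst[symmetric]) auto
  also have "\<dots> = (\<integral>\<^sup>+ b. ennreal (?w b) \<partial>PiM U M)"
    using fibre by (intro nn_integral_cong) simp
  also have "\<dots> = 1" using w unfolding is_density_def by simp
  finally show ?thesis
    using m nonneg T unfolding is_density_def by simp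
qed

lemma elbo_as_phi_integral:
  assumes partition: "C \<inter> U = {}" "C \<union> U = {0..K}"
    and sfM: "\<forall>k\<in>{0..K}. sigma_finite_measure (M k)" and sfN: "sigma_finite_measure N"
    and p_meas: "(\<lambda>z. p (fst z) (snd z)) \<in> borel_measurable (ThetaM K M \<Otimes>\<^sub>M N)"
    and qc: "is_cond_density K M C U qc" and qu: "\<forall>k\<in>U. is_density (M k) (qu k)"
    and iE: "\<forall>\<phi>\<in>space N. integrable (ThetaM K M) (\<lambda>\<theta>. qtheta U qc qu \<theta> * ln (p \<theta> \<phi>))"
    and r: "is_density N r" and fin: "elbo_finite K M N U p qc qu r"
  shows "integrable N (\<lambda>\<phi>. r \<phi> * (Etheta_logp K M U p qc qu \<phi>
      - (\<integral>\<theta>. qtheta U qc qu \<theta> * ln (qtheta U qc qu \<theta>) \<partial>ThetaM K M) - ln (r \<phi>)))"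
    "elbo K M N U p qc qu r = (\<integral>\<phi>. r \<phi> * (Etheta_logp K M U p qc qu \<phi>
      - (\<integral>\<theta>. qtheta U qc qu \<theta> * ln (qtheta U qc qu \<theta>) \<partial>ThetaM K M) - ln (r \<phi>)) \<partial>N)"
  using integral_product_objective_snd[OF pair_sigma_finite_ThetaM[OF sfM sfN]
      is_density_qtheta[OF partition sfM qc qu], of r p] r p_meas fin iE
  unfolding is_density_def elbo_finite_def elbo_def qjoint_def Etheta_logp_def by auto

lemma elbo_as_theta_integral:
  assumes partition: "C \<inter> U = {}" "C \<union> U = {0..K}"
    and sfM: "\<forall>k\<in>{0..K}. sigma_finite_measure (M k)" and sfN: "sigma_finite_measure N"
    and p_meas: "(\<lambda>z. p (fst z) (snd z)) \<in> borel_measurable (ThetaM K M \<Otimes>\<^sub>M N)"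
    and qc: "is_cond_density K M C U qc" and qu: "\<forall>k\<in>U. is_density (M k) (qu k)"
    and qphi: "is_density N qphi"
    and iE: "\<forall>\<theta>\<in>space (ThetaM K M). integrable N (\<lambda>\<phi>. qphi \<phi> * ln (p \<theta> \<phi>))"
    and fin: "elbo_finite K M N U p qc qu qphi"
  shows "integrable (ThetaM K M) (\<lambda>\<theta>. qtheta U qc qu \<theta> * (Ephi_logp N p qphi \<theta>
      - (\<integral>\<phi>. qphi \<phi> * ln (qphi \<phi>) \<partial>N) - ln (qtheta U qc qu \<theta>)))"
    "elbo K M N U p qc qu qphi = (\<integral>\<theta>. qtheta U qc qu \<theta> * (Ephi_logp N p qphi \<theta>
      - (\<integral>\<phi>. qphi \<phi> * ln (qphi \<phi>) \<partial>N) - ln (qtheta U qc qu \<theta>)) \<partial>ThetaM K M)"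
  using integral_product_objective_fst[OF pair_sigma_finite_ThetaM[OF sfM sfN], of "qtheta U qc qu" qphi p]
    is_density_qtheta[OF partition sfM qc qu] qphi p_meas fin iE
  unfolding is_density_def elbo_finite_def elbo_def qjoint_def Ephi_logp_def by auto

section \<open>Update of q(\<phi>)\<close>

lemma opt_phi_eq_gibbs_density:
  "opt_phi K M N U p qc qu = gibbs_density N (Etheta_logp K M U p qc qu)"
  by (simp add: fun_eq_iff opt_phi_def gibbs_density_def)

theorem optimal_phi:
  assumes partition: "C \<inter> U = {}" "C \<union> U = {0..K}"
    and sfM: "\<forall>k\<in>{0..K}. sigma_finite_measure (M k)" and sfN: "sigma_finite_measure N"
    and p_meas: "(\<lambda>z. p (fst z) (snd z)) \<in> borel_measurable (ThetaM K M \<Otimes>\<^sub>M N)"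
    and qc: "is_cond_density K M C U qc" and qu: "\<forall>k\<in>U. is_density (M k) (qu k)"
    and qphi: "is_density N qphi"
    and iE: "\<forall>\<phi>\<in>space N. integrable (ThetaM K M) (\<lambda>\<theta>. qtheta U qc qu \<theta> * ln (p \<theta> \<phi>))"
    and iexp: "integrable N (\<lambda>\<phi>. exp (Etheta_logp K M U p qc qu \<phi>))"
    and fin: "elbo_finite K M N U p qc qu (opt_phi K M N U p qc qu)"
  shows "is_density N (opt_phi K M N U p qc qu)
    \<and> (\<forall>qphi'. is_density N qphi' \<and> elbo_finite K M N U p qc qu qphi'
        \<longrightarrow> elbo K M N U p qc qu qphi' \<le> elbo K M N U p qc qu (opt_phi K M N U p qc qu))"
  unfolding opt_phi_eq_gibbs_density
  using gibbs_density_maximizes[OF qphi iexp,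
      where F = "elbo K M N U p qc qu" and admissible = "elbo_finite K M N U p qc qu"]
    elbo_as_phi_integral[OF partition sfM sfN p_meas qc qu iE] fin
  unfolding opt_phi_eq_gibbs_density by blast

section \<open>Updates of the conditional and of the marginals\<close>

locale conditional_update =
  fixes K :: nat and M :: "nat \<Rightarrow> 'a measure" and N :: "'b measure"
    and C U :: "nat set"
    and p :: "(nat \<Rightarrow> 'a) \<Rightarrow> 'b \<Rightarrow> real"
    and qc :: "(nat \<Rightarrow> 'a) \<Rightarrow> real" and qphi :: "'b \<Rightarrow> real"
  assumes partition: "C \<inter> U = {}" "C \<union> U = {0..K}"
    and sfM: "\<forall>k\<in>{0..K}. sigma_finite_measure (M k)"
    and sfN: "sigma_finite_measure N"
    and p_meas: "(\<lambda>z. p (fst z) (snd z)) \<in> borel_measurable (ThetaM K M \<Otimes>\<^sub>M N)"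
    and qc: "is_cond_density K M C U qc" and qphi: "is_density N qphi"
    and integrable_Ephi: "\<forall>\<theta>\<in>space (ThetaM K M). integrable N (\<lambda>\<phi>. qphi \<phi> * ln (p \<theta> \<phi>))"
    and integrable_exp_Ephi: "\<forall>\<theta>U\<in>space (PiM U M).
      integrable (PiM C M) (\<lambda>\<theta>C. exp (Ephi_logp N p qphi (merge C U (\<theta>C, \<theta>U))))"
begin

abbreviation "Ephi \<equiv> Ephi_logp N p qphi"
abbreviation "Hphi \<equiv> \<integral>\<phi>. qphi \<phi> * ln (qphi \<phi>) \<partial>N"
abbreviation "Z \<equiv> Zc M N C U p qphi"
abbreviation "opt \<equiv> opt_cond M N C U p qphi"

lemmas ThetaM_eq = ThetaM_partition[OF partition(2) sfM]
  and finite_blocks = finite_partition[OF partition(2) sfM]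
  and sigma_finite_blocks = sigma_finite_partition[OF partition(2) sfM]

lemma sigma_finite_PiM_subset: "I \<subseteq> C \<union> U \<Longrightarrow> sigma_finite_measure (PiM I M)"
  using sigma_finite_PiM[of I M] sigma_finite_blocks finite_blocks
  by (metis finite_Un finite_subset subsetD)

lemma pair_sigma_finite_PiM_subset:
  "I \<subseteq> C \<union> U \<Longrightarrow> J \<subseteq> C \<union> U \<Longrightarrow> pair_sigma_finite (PiM I M) (PiM J M)"
  using sigma_finite_PiM_subset by (simp add: pair_sigma_finite_def)

lemma Ephi_measurable: "Ephi \<in> borel_measurable (ThetaM K M)"
proof -
  interpret sigma_finite_measure N by (rule sfN)
  have [measurable]: "qphi \<in> borel_measurable N" using qphi unfolding is_density_def by simp
  note p_meas[measurable]
  have "(\<lambda>z. qphi (snd z) * ln (p (fst z) (snd z))) \<in> borel_measurable (ThetaM K M \<Otimes>\<^sub>M N)"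
    by measurable
  then have "(\<lambda>(\<theta>, \<phi>). qphi \<phi> * ln (p \<theta> \<phi>)) \<in> borel_measurable (ThetaM K M \<Otimes>\<^sub>M N)"
    by (simp add: split_beta)
  from borel_measurable_lebesgue_integral[OF this] show ?thesis
    unfolding Ephi_logp_def[abs_def] by simp
qed

lemma Z_measurable: "Z \<in> borel_measurable (PiM U M)"
proof -
  interpret sigma_finite_measure "PiM C M" by (rule sigma_finite_PiM_subset) simp
  have "merge C U \<in> measurable (PiM C M \<Otimes>\<^sub>M PiM U M) (ThetaM K M)"
    unfolding ThetaM_eq by (rule measurable_merge)
  then have "(\<lambda>z. exp (Ephi (merge C U z))) \<in> borel_measurable (PiM C M \<Otimes>\<^sub>M PiM U M)"
    using Ephi_measurable by measurable
  from measurable_pair_swap[OF this]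
  have "(\<lambda>(b, a). exp (Ephi (merge C U (a, b)))) \<in> borel_measurable (PiM U M \<Otimes>\<^sub>M PiM C M)"
    by (simp add: split_beta)
  from borel_measurable_lebesgue_integral[OF this] show ?thesis
    unfolding Zc_def[abs_def] by simp
qed

lemma opt_cond_merge:
  assumes "b \<in> space (PiM U M)"
  shows "opt (merge C U (a, b)) = gibbs_density (PiM C M) (\<lambda>a. Ephi (merge C U (a, b))) a"
proof -
  have "restrict (merge C U (a, b)) U = b"
    using assms partition(1) by (simp add: space_PiM PiE_def extensional_restrict)
  then show ?thesis
    unfolding opt_cond_def gibbs_density_def Zc_def by simp
qed

lemma is_cond_density_opt_cond: "is_cond_density K M C U opt"
proof -
  have "(\<lambda>\<theta>. restrict \<theta> U) \<in> measurable (ThetaM K M) (PiM U M)"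
    unfolding ThetaM_eq by (rule measurable_restrict_subset) auto
  then have "opt \<in> borel_measurable (ThetaM K M)"
    unfolding opt_cond_def[abs_def] using Ephi_measurable measurable_compose[OF _ Z_measurable]
    by measurable
  moreover have "0 \<le> opt \<theta>" for \<theta>
    unfolding opt_cond_def Zc_def by (simp add: integral_nonneg_AE)
  moreover have "is_density (PiM C M) (gibbs_density (PiM C M) (\<lambda>a. Ephi (merge C U (a, b))))"
    if "b \<in> space (PiM U M)" for b
    using is_density_gibbs_density[OF is_density_cond_density_fibre[OF partition(2) qc that]]
      integrable_exp_Ephi that by simp
  ultimately show ?thesis
    unfolding is_cond_density_def is_density_def by (simp add: opt_cond_merge)
qed

definition theta_integrand :: "((nat \<Rightarrow> 'a) \<Rightarrow> real) \<Rightarrow> (nat \<Rightarrow> 'a \<Rightarrow> real) \<Rightarrow> (nat \<Rightarrow> 'a) \<Rightarrow> real" where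
  "theta_integrand qc' qu' \<theta> = qtheta U qc' qu' \<theta> * (Ephi \<theta> - Hphi - ln (qtheta U qc' qu' \<theta>))"

definition fibre_elbo :: "((nat \<Rightarrow> 'a) \<Rightarrow> real) \<Rightarrow> (nat \<Rightarrow> 'a \<Rightarrow> real) \<Rightarrow> (nat \<Rightarrow> 'a) \<Rightarrow> real" where
  "fibre_elbo qc' qu' b = (\<integral>a. theta_integrand qc' qu' (merge C U (a, b)) \<partial>PiM C M)"

definition fibre_bound :: "(nat \<Rightarrow> 'a \<Rightarrow> real) \<Rightarrow> (nat \<Rightarrow> 'a) \<Rightarrow> real" where
  "fibre_bound qu' b = (\<Prod>m\<in>U. qu' m (b m)) * (ln (Z b) - Hphi - ln (\<Prod>m\<in>U. qu' m (b m)))"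

lemma theta_integrand_merge:
  "theta_integrand qc' qu' (merge C U (a, b)) = (qc' (merge C U (a, b)) * (\<Prod>m\<in>U. qu' m (b m)))
     * (Ephi (merge C U (a, b)) - Hphi - ln (qc' (merge C U (a, b)) * (\<Prod>m\<in>U. qu' m (b m))))"
  unfolding theta_integrand_def qtheta_merge[OF partition(1)] ..

lemma elbo_as_fibre_integral:
  assumes qc': "is_cond_density K M C U qc'" and qu': "\<forall>k\<in>U. is_density (M k) (qu' k)"
    and fin: "elbo_finite K M N U p qc' qu' qphi"
  shows "integrable (PiM U M) (fibre_elbo qc' qu')"
    "AE b in PiM U M. integrable (PiM C M) (\<lambda>a. theta_integrand qc' qu' (merge C U (a, b)))"
    "elbo K M N U p qc' qu' qphi = (\<integral>b. fibre_elbo qc' qu' b \<partial>PiM U M)"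
proof -
  note elbo_theta = elbo_as_theta_integral[OF partition sfM sfN p_meas qc' qu' qphi integrable_Ephi fin]
  interpret pair_sigma_finite "PiM C M" "PiM U M" by (rule pair_sigma_finite_PiM_subset) auto
  have "integrable (PiM (C \<union> U) M) (theta_integrand qc' qu')"
    using elbo_theta(1) ThetaM_eq unfolding theta_integrand_def[abs_def] by simp
  note merged = integrable_merge_PiM[OF sigma_finite_blocks partition(1) finite_blocks this]
    integral_merge_PiM[OF sigma_finite_blocks partition(1) finite_blocks this]
  have I: "integrable (PiM C M \<Otimes>\<^sub>M PiM U M) (\<lambda>(a, b). theta_integrand qc' qu' (merge C U (a, b)))"
    using merged(1) by (simp add: split_beta')
  show "AE b in PiM U M. integrable (PiM C M) (\<lambda>a. theta_integrand qc' qu' (merge C U (a, b)))"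
    using AE_integrable_snd[OF I] .
  show "integrable (PiM U M) (fibre_elbo qc' qu')"
    using integrable_snd[OF I] unfolding fibre_elbo_def[abs_def] .
  have "elbo K M N U p qc' qu' qphi = integral\<^sup>L (PiM (C \<union> U) M) (theta_integrand qc' qu')"
    using elbo_theta(2) ThetaM_eq unfolding theta_integrand_def[abs_def] by simp
  also have "\<dots> = (\<integral>b. fibre_elbo qc' qu' b \<partial>PiM U M)"
    unfolding merged(2) fibre_elbo_def integral_snd[OF I] by (simp add: split_beta')
  finally show "elbo K M N U p qc' qu' qphi = (\<integral>b. fibre_elbo qc' qu' b \<partial>PiM U M)" .
qed

lemma weight_nonneg:
  "\<forall>k\<in>U. is_density (M k) (qu' k) \<Longrightarrow> b \<in> space (PiM U M) \<Longrightarrow> 0 \<le> (\<Prod>m\<in>U. qu' m (b m))"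
  using prod_components_nonneg[of U U M qu' b] unfolding is_density_def by simp

lemma fibre_elbo_le:
  assumes qc': "is_cond_density K M C U qc'" and qu': "\<forall>k\<in>U. is_density (M k) (qu' k)"
    and b: "b \<in> space (PiM U M)"
    and i: "integrable (PiM C M) (\<lambda>a. theta_integrand qc' qu' (merge C U (a, b)))"
  shows "fibre_elbo qc' qu' b \<le> fibre_bound qu' b"
  using scaled_gibbs_objective_le[OF is_density_cond_density_fibre[OF partition(2) qc' b],
      of "\<lambda>a. Ephi (merge C U (a, b))" "\<Prod>m\<in>U. qu' m (b m)" Hphi]
    integrable_exp_Ephi b weight_nonneg[OF qu' b] i
  unfolding fibre_elbo_def fibre_bound_def theta_integrand_merge Zc_def by simp

lemma fibre_elbo_opt_cond:
  assumes qu': "\<forall>k\<in>U. is_density (M k) (qu' k)" and b: "b \<in> space (PiM U M)"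
  shows "fibre_elbo opt qu' b = fibre_bound qu' b"
  using scaled_gibbs_density_objective[OF is_density_cond_density_fibre[OF partition(2) qc b],
      of "\<lambda>a. Ephi (merge C U (a, b))" "\<Prod>m\<in>U. qu' m (b m)" Hphi]
    integrable_exp_Ephi b weight_nonneg[OF qu' b]
  unfolding fibre_elbo_def fibre_bound_def theta_integrand_merge opt_cond_merge[OF b] Zc_def
  by simp

theorem optimal_conditional:
  assumes qu: "\<forall>k\<in>U. is_density (M k) (qu k)" and fin: "elbo_finite K M N U p opt qu qphi"
  shows "is_cond_density K M C U opt
    \<and> (\<forall>qc'. is_cond_density K M C U qc' \<and> elbo_finite K M N U p qc' qu qphi
        \<longrightarrow> elbo K M N U p qc' qu qphi \<le> elbo K M N U p opt qu qphi)"
proof -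
  have "elbo K M N U p qc' qu qphi \<le> elbo K M N U p opt qu qphi"
    if qc': "is_cond_density K M C U qc'" and fin': "elbo_finite K M N U p qc' qu qphi" for qc'
  proof -
    note elbo_qc' = elbo_as_fibre_integral[OF qc' qu fin']
      and elbo_opt = elbo_as_fibre_integral[OF is_cond_density_opt_cond qu fin]
    have "AE b in PiM U M. fibre_elbo qc' qu b \<le> fibre_elbo opt qu b"
      using elbo_qc'(2) AE_space
      by eventually_elim (simp add: fibre_elbo_le[OF qc' qu] fibre_elbo_opt_cond[OF qu])
    then show ?thesis
      unfolding elbo_qc'(3) elbo_opt(3) by (rule integral_mono_AE[OF elbo_qc'(1) elbo_opt(1)])
  qed
  then show ?thesis using is_cond_density_opt_cond by blast
qed

end

context conditional_update
begin

lemma fibre_bound_restrict: "fibre_bound qu' (restrict b U) = fibre_bound qu' b"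
proof -
  have "Z (restrict b U) = Z b" unfolding Zc_def by simp
  moreover have "(\<Prod>m\<in>U. qu' m (restrict b U m)) = (\<Prod>m\<in>U. qu' m (b m))" by simp
  ultimately show ?thesis unfolding fibre_bound_def by simp
qed

lemma fibre_bound_measurable:
  assumes "\<forall>k\<in>U. is_density (M k) (qu' k)"
  shows "fibre_bound qu' \<in> borel_measurable (PiM U M)"
proof -
  have "(\<lambda>b. \<Prod>m\<in>U. qu' m (b m)) \<in> borel_measurable (PiM U M)"
    using borel_measurable_prod_components[of U U qu' M] assms unfolding is_density_def by simp
  then show ?thesis unfolding fibre_bound_def[abs_def] using Z_measurable by measurable
qed

lemma elbo_opt_cond_as_fibre_bound_integral:
  assumes qu': "\<forall>k\<in>U. is_density (M k) (qu' k)" and fin: "elbo_finite K M N U p opt qu' qphi"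
  shows "integrable (PiM U M) (fibre_bound qu')"
    "elbo K M N U p opt qu' qphi = integral\<^sup>L (PiM U M) (fibre_bound qu')"
proof -
  note elbo = elbo_as_fibre_integral[OF is_cond_density_opt_cond qu' fin]
  show "integrable (PiM U M) (fibre_bound qu')"
    using elbo(1) by (rule Bochner_Integration.integrable_cong[OF refl, THEN iffD1, rotated])
      (rule fibre_elbo_opt_cond[OF qu'])
  show "elbo K M N U p opt qu' qphi = integral\<^sup>L (PiM U M) (fibre_bound qu')"
    unfolding elbo(3)
    by (rule Bochner_Integration.integral_cong[OF refl]) (rule fibre_elbo_opt_cond[OF qu'])
qed

lemma fibre_bound_merge_singleton:
  "k \<in> U \<Longrightarrow> fibre_bound qu' (merge (U - {k}) {k} (\<theta>r, y)) = fibre_bound qu' (\<theta>r(k := y k))"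
  using fibre_bound_restrict[of qu' "\<theta>r(k := y k)"] by (simp add: insert_absorb)

definition rest_entropy :: "(nat \<Rightarrow> 'a \<Rightarrow> real) \<Rightarrow> nat \<Rightarrow> real" where
  "rest_entropy qu' k = (\<integral>\<theta>r. (\<Prod>m\<in>U - {k}. qu' m (\<theta>r m)) * ln (\<Prod>m\<in>U - {k}. qu' m (\<theta>r m))
     \<partial>PiM (U - {k}) M)"

lemma fibre_bound_update_integral:
  assumes k: "k \<in> U" and qu: "\<forall>m\<in>U. is_density (M m) (qu m)" and r: "is_density (M k) r"
    and x: "x \<in> space (M k)"
    and iL: "integrable (PiM (U - {k}) M)
      (\<lambda>\<theta>r. (\<Prod>m\<in>U - {k}. qu m (\<theta>r m)) * ln (Z (\<theta>r(k := x))))"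
    and i: "integrable (PiM (U - {k}) M) (\<lambda>\<theta>r. fibre_bound (qu(k := r)) (\<theta>r(k := x)))"
  shows "(\<integral>\<theta>r. fibre_bound (qu(k := r)) (\<theta>r(k := x)) \<partial>PiM (U - {k}) M)
    = r x * (Erest_logZ M N C U p qu qphi k x - (Hphi + rest_entropy qu k) - ln (r x))"
proof -
  define P where "P \<theta>r = (\<Prod>m\<in>U - {k}. qu m (\<theta>r m))" for \<theta>r
  have P: "is_density (PiM (U - {k}) M) P"
    unfolding P_def using is_density_prod_components[of "U - {k}" M qu] qu
      sigma_finite_blocks finite_blocks by auto
  have weight: "(\<Prod>m\<in>U. (qu(k := r)) m ((\<theta>r(k := x)) m)) = P \<theta>r * r x" for \<theta>r
  proof -
    have "(\<Prod>m\<in>U. (qu(k := r)) m ((\<theta>r(k := x)) m))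
        = (qu(k := r)) k ((\<theta>r(k := x)) k) * (\<Prod>m\<in>U - {k}. (qu(k := r)) m ((\<theta>r(k := x)) m))"
      by (rule prod.remove[OF finite_blocks(2) k])
    also have "(\<Prod>m\<in>U - {k}. (qu(k := r)) m ((\<theta>r(k := x)) m)) = P \<theta>r"
      unfolding P_def by (rule prod.cong) auto
    finally show ?thesis by simp
  qed
  have eq: "fibre_bound (qu(k := r)) (\<theta>r(k := x))
      = (P \<theta>r * r x) * (ln (Z (\<theta>r(k := x))) - Hphi - ln (P \<theta>r * r x))" for \<theta>r
    unfolding fibre_bound_def weight ..
  have "0 \<le> r x" using r x unfolding is_density_def by simp
  then have "(\<integral>\<theta>r. fibre_bound (qu(k := r)) (\<theta>r(k := x)) \<partial>PiM (U - {k}) M)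
      = r x * ((\<integral>\<theta>r. P \<theta>r * ln (Z (\<theta>r(k := x))) \<partial>PiM (U - {k}) M) - Hphi
          - (\<integral>\<theta>r. P \<theta>r * ln (P \<theta>r) \<partial>PiM (U - {k}) M) - ln (r x))"
    using scaled_density_objective[OF P, of "\<lambda>\<theta>r. ln (Z (\<theta>r(k := x)))" "r x" Hphi] iL i
    unfolding eq P_def by simp
  then show ?thesis
    unfolding Erest_logZ_def rest_entropy_def P_def by (simp add: algebra_simps)
qed

lemma elbo_opt_cond_as_block_integral:
  assumes k: "k \<in> U" and qu: "\<forall>m\<in>U. is_density (M m) (qu m)"
    and iL: "\<forall>x\<in>space (M k). integrable (PiM (U - {k}) M)
      (\<lambda>\<theta>r. (\<Prod>m\<in>U - {k}. qu m (\<theta>r m)) * ln (Z (\<theta>r(k := x))))"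
    and iexp: "integrable (M k) (\<lambda>x. exp (Erest_logZ M N C U p qu qphi k x))"
    and r: "is_density (M k) r" and fin: "elbo_finite K M N U p opt (qu(k := r)) qphi"
  shows "integrable (M k)
      (\<lambda>x. r x * (Erest_logZ M N C U p qu qphi k x - (Hphi + rest_entropy qu k) - ln (r x)))"
    "elbo K M N U p opt (qu(k := r)) qphi
      = (\<integral>x. r x * (Erest_logZ M N C U p qu qphi k x - (Hphi + rest_entropy qu k) - ln (r x)) \<partial>M k)"
proof -
  define H where
    "H x = r x * (Erest_logZ M N C U p qu qphi k x - (Hphi + rest_entropy qu k) - ln (r x))" for x
  let ?qu = "qu(k := r)" and ?U' = "U - {k}"
  have qu': "\<forall>m\<in>U. is_density (M m) (?qu m)" using qu r by simp
  note elbo = elbo_opt_cond_as_fibre_bound_integral[OF qu' fin]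
  have U: "?U' \<union> {k} = U" "?U' \<inter> {k} = {}" "finite ?U'" "\<forall>m\<in>?U' \<union> {k}. sigma_finite_measure (M m)"
    using k finite_blocks sigma_finite_blocks by auto
  have sfk: "sigma_finite_measure (M k)" using k sigma_finite_blocks by simp
  have iU': "integrable (PiM ?U' M \<Otimes>\<^sub>M PiM {k} M) (\<lambda>z. fibre_bound ?qu (merge ?U' {k} z))"
    using integrable_merge_PiM[OF U(4,2,3)] elbo(1) U(1) by simp
  have eU': "integral\<^sup>L (PiM U M) (fibre_bound ?qu)
      = (\<integral>z. fibre_bound ?qu (merge ?U' {k} z) \<partial>(PiM ?U' M \<Otimes>\<^sub>M PiM {k} M))"
    using integral_merge_PiM[OF U(4,2,3)] elbo(1) U(1) by simp
  have "(\<lambda>x. exp (Erest_logZ M N C U p qu qphi k x)) \<in> borel_measurable (M k)"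
    using iexp by simp
  from borel_measurable_ln[OF this]
  have [measurable]: "Erest_logZ M N C U p qu qphi k \<in> borel_measurable (M k)" by simp
  have [measurable]: "r \<in> borel_measurable (M k)" using r unfolding is_density_def by simp
  have H[measurable]: "H \<in> borel_measurable (M k)" unfolding H_def[abs_def] by measurable
  have Hk: "(\<lambda>y. H (y k)) \<in> borel_measurable (PiM {k} M)" by measurable
  have fibre: "(\<integral>\<theta>r. fibre_bound ?qu (merge ?U' {k} (\<theta>r, y)) \<partial>PiM ?U' M) = H (y k)"
    if y: "y \<in> space (PiM {k} M)"
      and fi: "integrable (PiM ?U' M) (\<lambda>\<theta>r. fibre_bound ?qu (merge ?U' {k} (\<theta>r, y)))" for y
  proof -
    have "y k \<in> space (M k)" using y by (auto simp: space_PiM)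
    then show ?thesis
      using fibre_bound_update_integral[OF k qu r _ _ fi[unfolded fibre_bound_merge_singleton[OF k]]] iL
      unfolding fibre_bound_merge_singleton[OF k] H_def by simp
  qed
  have psf: "pair_sigma_finite (PiM ?U' M) (PiM {k} M)"
    using pair_sigma_finite_PiM[OF U(4) U(3)] by simp
  have fibres: "integrable (PiM {k} M) (\<lambda>y. H (y k))"
    "(\<integral>z. fibre_bound ?qu (merge ?U' {k} z) \<partial>(PiM ?U' M \<Otimes>\<^sub>M PiM {k} M)) = (\<integral>y. H (y k) \<partial>PiM {k} M)"
    by (rule integral_pair_fibrewise_snd[OF psf iU' Hk], rule fibre, assumption+)+
  show "integrable (M k) H"
    using integrable_singleton_PiM[of M k H, OF sfk H fibres(1)] .
  show "elbo K M N U p opt ?qu qphi = integral\<^sup>L (M k) H"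
    using elbo(2) eU' fibres(2) integral_singleton_PiM[of M k H, OF sfk H] by simp
qed

lemma opt_block_eq_gibbs_density:
  "opt_block M N C U p qu qphi k = gibbs_density (M k) (Erest_logZ M N C U p qu qphi k)"
  by (simp add: fun_eq_iff opt_block_def gibbs_density_def)

theorem optimal_block:
  assumes k: "k \<in> U" and qu: "\<forall>m\<in>U. is_density (M m) (qu m)"
    and iL: "\<forall>x\<in>space (M k). integrable (PiM (U - {k}) M)
      (\<lambda>\<theta>r. (\<Prod>m\<in>U - {k}. qu m (\<theta>r m)) * ln (Z (\<theta>r(k := x))))"
    and iexp: "integrable (M k) (\<lambda>x. exp (Erest_logZ M N C U p qu qphi k x))"
    and fin: "elbo_finite K M N U p opt (qu(k := opt_block M N C U p qu qphi k)) qphi"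
  shows "is_density (M k) (opt_block M N C U p qu qphi k)
    \<and> (\<forall>r. is_density (M k) r \<and> elbo_finite K M N U p opt (qu(k := r)) qphi
        \<longrightarrow> elbo K M N U p opt (qu(k := r)) qphi
          \<le> elbo K M N U p opt (qu(k := opt_block M N C U p qu qphi k)) qphi)"
  using gibbs_density_maximizes[of "M k" "qu k", OF _ iexp,
      where F = "\<lambda>r. elbo K M N U p opt (qu(k := r)) qphi"
        and admissible = "\<lambda>r. elbo_finite K M N U p opt (qu(k := r)) qphi"]
    elbo_opt_cond_as_block_integral[OF k qu iL iexp] qu k fin
  unfolding opt_block_eq_gibbs_density by blast

end

theorem proposition1:
  fixes K :: nat and M :: "nat \<Rightarrow> 'a measure" and N :: "'b measure"
    and C U :: "nat set"
    and p :: "(nat \<Rightarrow> 'a) \<Rightarrow> 'b \<Rightarrow> real"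
    and qc :: "(nat \<Rightarrow> 'a) \<Rightarrow> real" and qu :: "nat \<Rightarrow> 'a \<Rightarrow> real" and qphi :: "'b \<Rightarrow> real"
  assumes partition: "C \<inter> U = {}" "C \<union> U = {0..K}"
    and sfM: "\<forall>k\<in>{0..K}. sigma_finite_measure (M k)"
    and sfN: "sigma_finite_measure N"
    and p_meas: "(\<lambda>z. p (fst z) (snd z)) \<in> borel_measurable (ThetaM K M \<Otimes>\<^sub>M N)"
    and p_pos: "\<forall>\<theta>\<in>space (ThetaM K M). \<forall>\<phi>\<in>space N. 0 < p \<theta> \<phi>"
    and q: "in_QPF K M N C U qc qu qphi"
  shows
   "((\<forall>\<phi>\<in>space N. integrable (ThetaM K M) (\<lambda>\<theta>. qtheta U qc qu \<theta> * ln (p \<theta> \<phi>)))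
     \<and> integrable N (\<lambda>\<phi>. exp (Etheta_logp K M U p qc qu \<phi>))
     \<and> elbo_finite K M N U p qc qu (opt_phi K M N U p qc qu)
     \<longrightarrow> is_density N (opt_phi K M N U p qc qu)
       \<and> (\<forall>qphi'. is_density N qphi' \<and> elbo_finite K M N U p qc qu qphi'
            \<longrightarrow> elbo K M N U p qc qu qphi' \<le> elbo K M N U p qc qu (opt_phi K M N U p qc qu)))
  \<and> ((\<forall>\<theta>\<in>space (ThetaM K M). integrable N (\<lambda>\<phi>. qphi \<phi> * ln (p \<theta> \<phi>)))
     \<and> (\<forall>\<theta>U\<in>space (PiM U M).
          integrable (PiM C M) (\<lambda>\<theta>C. exp (Ephi_logp N p qphi (merge C U (\<theta>C, \<theta>U)))))
     \<and> elbo_finite K M N U p (opt_cond M N C U p qphi) qu qphi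
     \<longrightarrow> is_cond_density K M C U (opt_cond M N C U p qphi)
       \<and> (\<forall>qc'. is_cond_density K M C U qc' \<and> elbo_finite K M N U p qc' qu qphi
            \<longrightarrow> elbo K M N U p qc' qu qphi \<le> elbo K M N U p (opt_cond M N C U p qphi) qu qphi))
  \<and> (\<forall>k\<in>U.
       (\<forall>\<theta>\<in>space (ThetaM K M). integrable N (\<lambda>\<phi>. qphi \<phi> * ln (p \<theta> \<phi>)))
     \<and> (\<forall>\<theta>U\<in>space (PiM U M).
          integrable (PiM C M) (\<lambda>\<theta>C. exp (Ephi_logp N p qphi (merge C U (\<theta>C, \<theta>U)))))
     \<and> (\<forall>x\<in>space (M k). integrable (PiM (U - {k}) M)
          (\<lambda>\<theta>r. (\<Prod>m\<in>U - {k}. qu m (\<theta>r m)) * ln (Zc M N C U p qphi (\<theta>r(k := x)))))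
     \<and> integrable (M k) (\<lambda>x. exp (Erest_logZ M N C U p qu qphi k x))
     \<and> elbo_finite K M N U p (opt_cond M N C U p qphi) (qu(k := opt_block M N C U p qu qphi k)) qphi
     \<longrightarrow> is_density (M k) (opt_block M N C U p qu qphi k)
       \<and> (\<forall>r. is_density (M k) r \<and> elbo_finite K M N U p (opt_cond M N C U p qphi) (qu(k := r)) qphi
            \<longrightarrow> elbo K M N U p (opt_cond M N C U p qphi) (qu(k := r)) qphi
                \<le> elbo K M N U p (opt_cond M N C U p qphi)
                     (qu(k := opt_block M N C U p qu qphi k)) qphi))"
proof -
  have qc: "is_cond_density K M C U qc" and qu: "\<forall>k\<in>U. is_density (M k) (qu k)"
    and qphi: "is_density N qphi"
    using q unfolding in_QPF_def by auto
  note update = conditional_update.intro[OF partition sfM sfN p_meas qc qphi]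
  show ?thesis
    using optimal_phi[OF partition sfM sfN p_meas qc qu qphi]
      conditional_update.optimal_conditional[OF update] conditional_update.optimal_block[OF update] qu
    by blast
qed

end
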